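(* Let $X$ be a real reflexive Banach space, let $h\in\mathcal{H}$ and $(x,x^{\ast})\in X\times X^{\ast}$. If $\max\{(\mathcal{A}h)(x,x^{\ast}),((\mathcal{A}h)^{\ast}\circ i)(x,x^{\ast})\}=+\infty$, then $(\mathcal{A}^{\infty}h)(x,x^{\ast})=+\infty$. If $\max\{(\mathcal{A}h)(x,x^{\ast}),((\mathcal{A}h)^{\ast}\circ i)(x,x^{\ast})\}<+\infty$, $\epsilon>0$, and $n$ is an integer with $n>1+\log_2\big((\mathcal{A}h)(x,x^{\ast})-((\mathcal{A}h)^{\ast}\circ i)(x,x^{\ast})\big)-\log_2\epsilon$, then $(\mathcal{A}^n h)(x,x^{\ast})-\epsilon\le(\mathcal{A}^{\infty}h)(x,x^{\ast})$.
   Context: $X^{\ast}$ is the dual of $X$ with pairing $\langle\cdot,\cdot\rangle$. The dual of $X\times X^{\ast}$ is identified with $X^{\ast}\times X$ via $\langle (x,x^{\ast}),(y^{\ast},y)\rangle=\langle x,y^{\ast}\rangle+\langle y,x^{\ast}\rangle$; for $g:X\times X^{\ast}\to\mathbb{R}\cup\{+\infty\}$, $g^{\ast}(y^{\ast},y)=\sup_{(z,z^{\ast})}\{\langle z,y^{\ast}\rangle+\langle y,z^{\ast}\rangle-g(z,z^{\ast})\}$, and $i(z,z^{\ast})=(z^{\ast},z)$. For a maximally monotone $T:X\rightrightarrows X^{\ast}$, $\mathcal{H}(T)$ is the family of lower semicontinuous convex functions $h:X\times X^{\ast}\to\mathbb{R}\cup\{+\infty\}$ with $h(z,z^{\ast})\ge\langle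 z,z^{\ast}\rangle$ everywhere and $h(z,z^{\ast})=\langle z,z^{\ast}\rangle$ whenever $z^{\ast}\in T(z)$; $\mathcal{H}$ is the union of $\mathcal{H}(T)$ over all maximally monotone $T$. $\mathcal{A}h:=\tfrac12(h+h^{\ast}\circ i)$, $\mathcal{A}^n$ is its $n$-th iterate, and $\mathcal{A}^{\infty}h$ is the pointwise limit (equivalently infimum) of the pointwise non-increasing sequence $\{\mathcal{A}^n h\}_{n\ge1}$. The convention $\log_2 0=-\infty$ applies. *)

theory Defs
  imports "HOL-Analysis.Analysis"
begin

(* X is a real Banach space of type 'a; its dual X* is the type of bounded linear
   functionals 'a => real (blinfun); the pairing is blinfun_apply xs x. *)

definition reflexive_space :: "'a::banach itself \<Rightarrow> bool" where
  "reflexive_space _ \<longleftrightarrow>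
     (\<forall>\<phi> :: ('a \<Rightarrow>\<^sub>L real) \<Rightarrow>\<^sub>L real. \<exists>x::'a. \<forall>f. blinfun_apply \<phi> f = blinfun_apply f x)"

definition pairing :: "'a::real_normed_vector \<Rightarrow> ('a \<Rightarrow>\<^sub>L real) \<Rightarrow> real" where
  "pairing x xs = blinfun_apply xs x"

definition monotone_op :: "('a::real_normed_vector \<Rightarrow> ('a \<Rightarrow>\<^sub>L real) set) \<Rightarrow> bool" where
  "monotone_op T \<longleftrightarrow> (\<forall>x y xs ys. xs \<in> T x \<longrightarrow> ys \<in> T y \<longrightarrow> pairing (x - y) (xs - ys) \<ge> 0)"

definition maximal_monotone :: "('a::real_normed_vector \<Rightarrow> ('a \<Rightarrow>\<^sub>L real) set) \<Rightarrow> bool" where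
  "maximal_monotone T \<longleftrightarrow> monotone_op T \<and>
     (\<forall>S. monotone_op S \<longrightarrow> (\<forall>x. T x \<subseteq> S x) \<longrightarrow> S = T)"

definition lsc_fun :: "('b::topological_space \<Rightarrow> ereal) \<Rightarrow> bool" where
  "lsc_fun g \<longleftrightarrow> (\<forall>c::real. closed {z. g z \<le> ereal c})"

definition convex_fun :: "('b::real_vector \<Rightarrow> ereal) \<Rightarrow> bool" where
  "convex_fun g \<longleftrightarrow> convex {(z, r::real). g z \<le> ereal r}"

definition HT :: "('a::real_normed_vector \<Rightarrow> ('a \<Rightarrow>\<^sub>L real) set) \<Rightarrow> ('a \<times> ('a \<Rightarrow>\<^sub>L real) \<Rightarrow> ereal) set" where
  "HT T = {h. lsc_fun h \<and> convex_fun h \<and>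
      (\<forall>z zs. h (z, zs) \<ge> ereal (pairing z zs)) \<and>
      (\<forall>z zs. zs \<in> T z \<longrightarrow> h (z, zs) = ereal (pairing z zs))}"

definition HH :: "('a::real_normed_vector \<times> ('a \<Rightarrow>\<^sub>L real) \<Rightarrow> ereal) set" where
  "HH = (\<Union>T\<in>{T. maximal_monotone T}. HT T)"

(* Fenchel conjugate on X x X*, with dual identified with X* x X. *)
definition fconj :: "('a::real_normed_vector \<times> ('a \<Rightarrow>\<^sub>L real) \<Rightarrow> ereal) \<Rightarrow> (('a \<Rightarrow>\<^sub>L real) \<times> 'a \<Rightarrow> ereal)" where
  "fconj g = (\<lambda>(ys, y). SUP p. ereal (pairing (fst p) ys + pairing y (snd p)) - g p)"

definition iswap :: "'a \<times> 'b \<Rightarrow> 'b \<times> 'a" where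
  "iswap = (\<lambda>(z, zs). (zs, z))"

definition opA :: "('a::real_normed_vector \<times> ('a \<Rightarrow>\<^sub>L real) \<Rightarrow> ereal) \<Rightarrow> ('a \<times> ('a \<Rightarrow>\<^sub>L real) \<Rightarrow> ereal)" where
  "opA h = (\<lambda>p. ereal (1/2) * (h p + (fconj h \<circ> iswap) p))"

definition opA_inf :: "('a::real_normed_vector \<times> ('a \<Rightarrow>\<^sub>L real) \<Rightarrow> ereal) \<Rightarrow> ('a \<times> ('a \<Rightarrow>\<^sub>L real) \<Rightarrow> ereal)" where
  "opA_inf h = (\<lambda>p. INF n\<in>{1..}. (opA ^^ n) h p)"

end

theory Submission imports Defs begin

text \<open>Write \<open>F\<^sub>m = \<A>\<^sup>m\<^sup>+\<^sup>1 h\<close>, \<open>a\<^sub>m = F\<^sub>m(x,x\<^sup>*)\<close> and \<open>b\<^sub>m = (F\<^sub>m\<^sup>* \<circ> i)(x,x\<^sup>*)\<close>.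
  Since a conjugate of an average is at most the average of the conjugates and the biconjugate
  lies below the function, \<open>b\<^sub>m \<le> a\<^sub>m\<close>; hence \<open>a\<^sub>m\<^sub>+\<^sub>1 = (a\<^sub>m + b\<^sub>m)/2\<close> decreases, and by
  antitonicity of conjugation \<open>b\<^sub>m\<close> increases. So every \<open>b\<^sub>m\<close> is a lower bound of
  \<open>\<A>\<^sup>\<infinity>h(x,x\<^sup>*) = inf a\<^sub>m\<close>, while the gap \<open>a\<^sub>m - b\<^sub>m\<close> at least halves at each step.
  None of this uses reflexivity of \<open>X\<close> or \<open>h \<in> \<H>\<close>.\<close>

lemma fenchel_young_le_fconj:
  "ereal (pairing (fst p) ys + pairing y (snd p)) - g p \<le> fconj g (ys, y)"
  unfolding fconj_def by (auto intro: SUP_upper)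

lemma fconj_antimono:
  assumes "\<And>q. f q \<le> g q"
  shows "fconj g v \<le> fconj f v"
  unfolding fconj_def by (cases v) (auto intro!: SUP_mono ereal_minus_mono assms)

lemma fconj_iswap_neq_minf:
  assumes "g p \<noteq> \<infinity>"
  shows "fconj g (iswap p) \<noteq> -\<infinity>"
proof
  assume "fconj g (iswap p) = -\<infinity>"
  then have "ereal (pairing (fst p) (snd p) + pairing (fst p) (snd p)) - g p \<le> -\<infinity>"
    using fenchel_young_le_fconj[of p "snd p" "fst p" g] by (simp add: iswap_def case_prod_beta)
  with assms show False by (cases "g p") auto
qed

lemma fconj_fconj_iswap_le: "fconj (fconj g \<circ> iswap) (iswap p) \<le> g p"
proof (cases p)
  case (Pair u us)
  have "ereal (pairing z us + pairing u zs) - fconj g (zs, z) \<le> g p" for z zs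
  proof -
    have "ereal (pairing z us + pairing u zs) - g p \<le> fconj g (zs, z)"
      using fenchel_young_le_fconj[of p zs z g] by (simp add: Pair add.commute)
    then show ?thesis by (cases "g p"; cases "fconj g (zs, z)") auto
  qed
  then show ?thesis
    unfolding Pair iswap_def fconj_def[of "fconj g \<circ> _"]
    by (auto simp: Pair intro!: SUP_least)
qed

lemma fconj_midpoint_le:
  "fconj (\<lambda>q. ereal (1/2) * (f q + g q)) v \<le> ereal (1/2) * (fconj f v + fconj g v)"
proof (cases v)
  case (Pair ys y)
  have "ereal c - ereal (1/2) * (f q + g q) \<le> ereal (1/2) * (fconj f v + fconj g v)"
    if "ereal c - f q \<le> fconj f v" "ereal c - g q \<le> fconj g v" for c q
    using that by (cases "f q"; cases "g q"; cases "fconj f v"; cases "fconj g v")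
      (auto simp: field_simps)
  then show ?thesis
    unfolding Pair fconj_def[of "\<lambda>q. ereal (1/2) * (f q + g q)"]
    by (auto simp: Pair intro!: SUP_least fenchel_young_le_fconj)
qed

lemma fconj_opA_iswap_le_opA: "fconj (opA g) (iswap p) \<le> opA g p"
proof -
  have "fconj (opA g) (iswap p)
        \<le> ereal (1/2) * (fconj g (iswap p) + fconj (fconj g \<circ> iswap) (iswap p))"
    unfolding opA_def by (rule fconj_midpoint_le)
  also have "\<dots> \<le> ereal (1/2) * (fconj g (iswap p) + g p)"
    by (intro ereal_mult_left_mono add_left_mono fconj_fconj_iswap_le) simp
  also have "\<dots> = opA g p"
    by (simp add: opA_def add.commute)
  finally show ?thesis .
qed

lemma opA_opA_le: "opA (opA g) p \<le> opA g p"
  using fconj_opA_iswap_le_opA[of g p]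
  by (cases "opA g p"; cases "fconj (opA g) (iswap p)") (auto simp: opA_def[of "opA g"])

lemma halving_le_of_log_condition:
  fixes d \<epsilon> :: real
  assumes "0 < \<epsilon>" and "d = 0 \<or> (0 < d \<and> 1 + log 2 d - log 2 \<epsilon> < real (Suc k))"
  shows "d / 2 ^ k \<le> \<epsilon>"
proof (cases "d = 0")
  case True
  with assms(1) show ?thesis by simp
next
  case False
  with assms have "0 < d" "log 2 (d / \<epsilon>) < real k"
    by (simp_all add: log_divide)
  then have "2 powr log 2 (d / \<epsilon>) < 2 powr real k"
    by (intro powr_less_mono) simp_all
  then have "d / \<epsilon> < 2 ^ k"
    using \<open>0 < d\<close> assms(1) by (simp add: powr_realpow)
  then show ?thesis
    using assms(1) by (simp add: field_simps)
qed

locale averaging_iteration =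
  fixes a b :: "nat \<Rightarrow> ereal"
  assumes a_Suc: "a (Suc m) = ereal (1/2) * (a m + b m)"
    and b_le_a: "b m \<le> a m"
    and incseq_b: "incseq b"
begin

lemma decseq_a: "decseq a"
proof (rule decseq_SucI)
  fix m
  show "a (Suc m) \<le> a m"
    using b_le_a[of m] unfolding a_Suc by (cases "a m"; cases "b m") auto
qed

lemma b_le_a_any: "b m \<le> a k"
proof -
  have "b m \<le> b (max m k)"
    using incseq_b by (simp add: incseqD)
  also have "\<dots> \<le> a (max m k)"
    by (rule b_le_a)
  also have "\<dots> \<le> a k"
    using decseq_a by (simp add: decseqD)
  finally show ?thesis .
qed

lemma b_le_INF_a: "b m \<le> (INF k. a k)"
  by (rule INF_greatest) (rule b_le_a_any)

lemma a_eq_infinity: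
  assumes "a 0 = \<infinity>"
  shows "a m = \<infinity>"
  by (induction m) (simp_all add: assms a_Suc)

lemma finite_values:
  assumes "a 0 \<noteq> \<infinity>" "b 0 \<noteq> -\<infinity>"
  shows "\<bar>a m\<bar> \<noteq> \<infinity>" "\<bar>b m\<bar> \<noteq> \<infinity>"
proof -
  have "b 0 \<le> b m" "b m \<le> a m" "a m \<le> a 0"
    using b_le_a_any by (auto intro: incseqD[OF incseq_b] decseqD[OF decseq_a])
  with assms show "\<bar>a m\<bar> \<noteq> \<infinity>" "\<bar>b m\<bar> \<noteq> \<infinity>"
    by auto
qed

lemma gap_halving:
  assumes "a 0 \<noteq> \<infinity>" "b 0 \<noteq> -\<infinity>"
  shows "real_of_ereal (a m) - real_of_ereal (b m) \<le> real_of_ereal (a 0 - b 0) / 2 ^ m"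
proof (induction m)
  case 0
  show ?case
    using finite_values[OF assms, of 0] by (cases "a 0"; cases "b 0") simp_all
next
  case (Suc m)
  note fin = finite_values[OF assms]
  have "real_of_ereal (a (Suc m)) = (real_of_ereal (a m) + real_of_ereal (b m)) / 2"
    using a_Suc[of m] fin[of m] by (cases "a m"; cases "b m") simp_all
  moreover have "real_of_ereal (b m) \<le> real_of_ereal (b (Suc m))"
    using incseqD[OF incseq_b, of m "Suc m"] fin[of m] fin[of "Suc m"]
    by (cases "b m"; cases "b (Suc m)") simp_all
  ultimately have "real_of_ereal (a (Suc m)) - real_of_ereal (b (Suc m))
      \<le> (real_of_ereal (a m) - real_of_ereal (b m)) / 2"
    by simp
  also have "\<dots> \<le> real_of_ereal (a 0 - b 0) / 2 ^ m / 2"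
    using Suc.IH by (simp add: divide_right_mono)
  finally show ?case
    by simp
qed

lemma a_minus_le_b:
  assumes "a 0 \<noteq> \<infinity>" "b 0 \<noteq> -\<infinity>" "real_of_ereal (a 0 - b 0) / 2 ^ m \<le> \<epsilon>"
  shows "a m - ereal \<epsilon> \<le> b m"
  using gap_halving[OF assms(1,2), of m] assms(3) finite_values[OF assms(1,2), of m]
  by (cases "a m"; cases "b m") simp_all

end

lemma averaging_iteration_opA:
  "averaging_iteration (\<lambda>m. (opA ^^ Suc m) h p) (\<lambda>m. fconj ((opA ^^ Suc m) h) (iswap p))"
proof
  fix m
  show "(opA ^^ Suc (Suc m)) h p
        = ereal (1/2) * ((opA ^^ Suc m) h p + fconj ((opA ^^ Suc m) h) (iswap p))"
    by (simp add: opA_def)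
  show "fconj ((opA ^^ Suc m) h) (iswap p) \<le> (opA ^^ Suc m) h p"
    by (simp add: fconj_opA_iswap_le_opA)
next
  show "incseq (\<lambda>m. fconj ((opA ^^ Suc m) h) (iswap p))"
    by (intro incseq_SucI fconj_antimono) (simp add: opA_opA_le)
qed

lemma opA_inf_eq_INF_Suc: "opA_inf h p = (INF m. (opA ^^ Suc m) h p)"
proof -
  have "{1::nat..} = range Suc"
    by (auto simp: image_iff dest: Suc_le_D)
  then show ?thesis
    by (simp add: opA_inf_def image_comp comp_def)
qed

theorem theorem2p4:
  fixes h :: "'a::banach \<times> ('a \<Rightarrow>\<^sub>L real) \<Rightarrow> ereal"
    and x :: 'a and xs :: "'a \<Rightarrow>\<^sub>L real"
  assumes "reflexive_space TYPE('a)"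
    and "h \<in> HH"
  shows "(max (opA h (x, xs)) ((fconj (opA h) \<circ> iswap) (x, xs)) = \<infinity>
            \<longrightarrow> opA_inf h (x, xs) = \<infinity>)
       \<and> (\<forall>(\<epsilon>::real) (n::nat).
            max (opA h (x, xs)) ((fconj (opA h) \<circ> iswap) (x, xs)) < \<infinity>
            \<longrightarrow> \<epsilon> > 0 \<longrightarrow> n \<ge> 1
            \<longrightarrow> (let d = real_of_ereal (opA h (x, xs) - (fconj (opA h) \<circ> iswap) (x, xs))
                 in d = 0 \<or> (d > 0 \<and> real n > 1 + log 2 d - log 2 \<epsilon>))
            \<longrightarrow> (opA ^^ n) h (x, xs) - ereal \<epsilon> \<le> opA_inf h (x, xs))"
proof -
  define a where "a m = (opA ^^ Suc m) h (x, xs)" for m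
  define b where "b m = fconj ((opA ^^ Suc m) h) (iswap (x, xs))" for m
  interpret averaging_iteration a b
    unfolding a_def b_def by (rule averaging_iteration_opA)
  have a0: "opA h (x, xs) = a 0" and b0: "(fconj (opA h) \<circ> iswap) (x, xs) = b 0"
    by (simp_all add: a_def b_def)
  have inf: "opA_inf h (x, xs) = (INF m. a m)"
    unfolding a_def by (rule opA_inf_eq_INF_Suc)
  show ?thesis
    unfolding a0 b0 inf max_absorb1[OF b_le_a]
  proof (intro conjI allI impI)
    assume "a 0 = \<infinity>"
    then show "(INF m. a m) = \<infinity>"
      by (simp add: a_eq_infinity)
  next
    fix \<epsilon> :: real and n :: nat
    assume fin: "a 0 < \<infinity>" and "\<epsilon> > 0" "n \<ge> 1"
      and log_bound: "let d = real_of_ereal (a 0 - b 0)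
        in d = 0 \<or> (d > 0 \<and> real n > 1 + log 2 d - log 2 \<epsilon>)"
    obtain k where n: "n = Suc k"
      using \<open>n \<ge> 1\<close> by (cases n) auto
    have b0_fin: "b 0 \<noteq> -\<infinity>"
      using fin unfolding b_def a_def by (intro fconj_iswap_neq_minf) simp
    have "real_of_ereal (a 0 - b 0) / 2 ^ k \<le> \<epsilon>"
      using log_bound \<open>\<epsilon> > 0\<close> by (intro halving_le_of_log_condition) (simp_all add: Let_def n)
    then have "a k - ereal \<epsilon> \<le> b k"
      using fin b0_fin by (intro a_minus_le_b) simp_all
    also have "b k \<le> (INF m. a m)"
      by (rule b_le_INF_a)
    finally show "(opA ^^ n) h (x, xs) - ereal \<epsilon> \<le> (INF m. a m)"
      unfolding a_def n .
  qed
qed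

end
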